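(* Let $G$ be a finite group and let $S$ be a partial rainbow on $G$. Then $S$ is a minimal generating set of the transfer system $\langle S\rangle$.
   Context: For a finite group $G$, an arrow is a pair $(K,H)$ of subgroups with $K\leqslant H$; it is an identity arrow if $K=H$. A $G$-transfer system is a set of arrows containing all identity arrows and closed under composition ($(A,B),(B,C)\Rightarrow(A,C)$), conjugation ($(A,B)\Rightarrow(gAg^{-1},gBg^{-1})$ for $g\in G$) and restriction ($(A,B)$ and $L\leqslant B\Rightarrow(A\cap L,L)$). For a set $S$ of non-identity arrows, $\langle S\rangle$ is the smallest transfer system containing $S$; $S$ is a minimal generating set of a transfer system $\mathsf{T}$ if $\langle S\rangle=\mathsf{T}$ and $\langle S\setminus\{s\}\rangle\neq\mathsf{T}$ for all $s\in S$. For a subgroup $K$, $P(K)$ denotes the sum of the exponents in the prime factorization of $|K|$. A rainbow on $\mathbb{N}$ is a finite set of pairs $\{(a_i,b_i)\}_{0\leqslant i\leqslant k}$ of natural numbers such that $i<j$ implies $a_i<a_j<b_j<b_i$. A partial rainbow on $G$ is a set $S$ of non-identity arrows such that (1) the set $\{(P(K),P(H)) : (K,H)\in S\}$ is a rainbow, and (2) for any $g\in G$ and $(K,H)\in S$, if $(gKg^{-1},gHg^{-1})\neq(K,H)$ then $(gKg^{-1},gHg^{-1})\notin S$. *)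

theory Defs
  imports "HOL-Algebra.Algebra" "HOL-Computational_Algebra.Primes"
begin

definition arrows :: "('a, 'b) monoid_scheme \<Rightarrow> ('a set \<times> 'a set) set" where
  "arrows G = {(K, H). subgroup K G \<and> subgroup H G \<and> K \<subseteq> H}"

definition conjg :: "('a, 'b) monoid_scheme \<Rightarrow> 'a \<Rightarrow> 'a set \<Rightarrow> 'a set" where
  "conjg G g A = (\<lambda>x. g \<otimes>\<^bsub>G\<^esub> x \<otimes>\<^bsub>G\<^esub> inv\<^bsub>G\<^esub> g) ` A"

definition transfer_system :: "('a, 'b) monoid_scheme \<Rightarrow> ('a set \<times> 'a set) set \<Rightarrow> bool" where
  "transfer_system G T \<longleftrightarrow>
     T \<subseteq> arrows G \<and>
     (\<forall>H. subgroup H G \<longrightarrow> (H, H) \<in> T) \<and>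
     (\<forall>A B C. (A, B) \<in> T \<and> (B, C) \<in> T \<longrightarrow> (A, C) \<in> T) \<and>
     (\<forall>A B g. (A, B) \<in> T \<and> g \<in> carrier G \<longrightarrow> (conjg G g A, conjg G g B) \<in> T) \<and>
     (\<forall>A B L. (A, B) \<in> T \<and> subgroup L G \<and> L \<subseteq> B \<longrightarrow> (A \<inter> L, L) \<in> T)"

definition gen_ts :: "('a, 'b) monoid_scheme \<Rightarrow> ('a set \<times> 'a set) set \<Rightarrow> ('a set \<times> 'a set) set" where
  "gen_ts G S = \<Inter> {T. transfer_system G T \<and> S \<subseteq> T}"

definition nonid_arrows :: "('a, 'b) monoid_scheme \<Rightarrow> ('a set \<times> 'a set) set \<Rightarrow> bool" where
  "nonid_arrows G S \<longleftrightarrow> S \<subseteq> arrows G \<and> (\<forall>(K, H) \<in> S. K \<noteq> H)"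

definition minimal_generating_set ::
  "('a, 'b) monoid_scheme \<Rightarrow> ('a set \<times> 'a set) set \<Rightarrow> ('a set \<times> 'a set) set \<Rightarrow> bool" where
  "minimal_generating_set G S T \<longleftrightarrow>
     nonid_arrows G S \<and> gen_ts G S = T \<and> (\<forall>s \<in> S. gen_ts G (S - {s}) \<noteq> T)"

definition Pexp :: "'a set \<Rightarrow> nat" where
  "Pexp K = (\<Sum>p \<in> prime_factors (card K). multiplicity p (card K))"

definition rainbow :: "(nat \<times> nat) set \<Rightarrow> bool" where
  "rainbow R \<longleftrightarrow> (\<exists>(a :: nat \<Rightarrow> nat) (b :: nat \<Rightarrow> nat) (k :: nat).
      R = {(a i, b i) | i. i \<le> k} \<and>
      (\<forall>i j. i < j \<and> j \<le> k \<longrightarrow> a i < a j \<and> a j < b j \<and> b j < b i))"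

definition partial_rainbow :: "('a, 'b) monoid_scheme \<Rightarrow> ('a set \<times> 'a set) set \<Rightarrow> bool" where
  "partial_rainbow G S \<longleftrightarrow>
     nonid_arrows G S \<and>
     rainbow ((\<lambda>(K, H). (Pexp K, Pexp H)) ` S) \<and>
     (\<forall>g \<in> carrier G. \<forall>(K, H) \<in> S.
        (conjg G g K, conjg G g H) \<noteq> (K, H) \<longrightarrow> (conjg G g K, conjg G g H) \<notin> S)"

end

theory Submission imports Defs begin

text \<open>
  Fix \<open>(K, H) \<in> S\<close>. Say that an arrow \<open>(A, B)\<close> covers \<open>(K, H)\<close> if for some \<open>g\<close> we have
  \<open>gKg\<^sup>-\<^sup>1 \<subseteq> A\<close> and \<open>gHg\<^sup>-\<^sup>1 \<subseteq> B\<close> but not \<open>gHg\<^sup>-\<^sup>1 \<subseteq> A\<close>, i.e. restricting \<open>(A, B)\<close> to \<open>gHg\<^sup>-\<^sup>1\<close>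
  yields a non-identity arrow above \<open>gKg\<^sup>-\<^sup>1\<close>. The non-covering arrows form a transfer system,
  and \<open>(K, H)\<close> covers itself. Every other arrow \<open>(K', H')\<close> of \<open>S\<close> is non-covering: otherwise
  \<open>P(K) \<le> P(K')\<close> and \<open>P(H) \<le> P(H')\<close>, which the rainbow condition only allows with equality;
  then \<open>(K', H')\<close> is a conjugate of \<open>(K, H)\<close>, which condition (2) of a partial rainbow forbids.
  Hence \<open>\<langle>S - {(K, H)}\<rangle>\<close> does not contain \<open>(K, H)\<close>.
\<close>

lemma (in group) conjg_carrier:
  assumes "g \<in> carrier G" "A \<subseteq> carrier G"
  shows "conjg G g A \<subseteq> carrier G"
  using assms unfolding conjg_def by auto

lemma (in group) conjg_conjg:
  assumes "g \<in> carrier G" "h \<in> carrier G" "A \<subseteq> carrier G"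
  shows "conjg G g (conjg G h A) = conjg G (g \<otimes> h) A"
  unfolding conjg_def image_image
  using assms by (intro image_cong) (auto simp: inv_mult_group m_assoc)

lemma (in group) conjg_one:
  assumes "A \<subseteq> carrier G"
  shows "conjg G \<one> A = A"
proof -
  have "\<And>x. x \<in> A \<Longrightarrow> \<one> \<otimes> x \<otimes> inv \<one> = x" using assms by auto
  then show ?thesis unfolding conjg_def by simp
qed

lemma (in group) conjg_inv_conjg:
  assumes "g \<in> carrier G" "A \<subseteq> carrier G"
  shows "conjg G (inv g) (conjg G g A) = A"
  using assms by (simp add: conjg_conjg conjg_one)

lemma (in group) conjg_subset_conjg_iff:
  assumes "g \<in> carrier G" "A \<subseteq> carrier G" "B \<subseteq> carrier G"
  shows "conjg G g A \<subseteq> conjg G g B \<longleftrightarrow> A \<subseteq> B"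
proof
  assume "conjg G g A \<subseteq> conjg G g B"
  then have "conjg G (inv g) (conjg G g A) \<subseteq> conjg G (inv g) (conjg G g B)"
    unfolding conjg_def by (rule image_mono)
  then show "A \<subseteq> B" using assms by (simp add: conjg_inv_conjg)
qed (auto simp: conjg_def)

lemma (in group) conjg_eq_cosets: "conjg G g A = g <# A #> inv g"
  unfolding conjg_def l_coset_def r_coset_def by auto

lemma (in group) subgroup_conjg:
  assumes "g \<in> carrier G" "subgroup A G"
  shows "subgroup (conjg G g A) G"
  using subgroup_conjugation_is_surj1[of "inv g" A] assms by (simp add: conjg_eq_cosets)

lemma (in group) card_conjg:
  assumes "g \<in> carrier G" "A \<subseteq> carrier G"
  shows "card (conjg G g A) = card A"
proof -
  have "inj_on (\<lambda>x. g \<otimes> x \<otimes> inv g) A"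
    using assms conjugation_is_inj by (intro inj_onI) blast
  then show ?thesis unfolding conjg_def by (rule card_image)
qed

lemma Pexp_eq_size: "Pexp K = size (prime_factorization (card K))"
proof -
  have "size (prime_factorization (card K))
      = (\<Sum>p \<in> prime_factors (card K). count (prime_factorization (card K)) p)"
    by (metis size_multiset_overloaded_eq)
  also have "\<dots> = Pexp K"
    unfolding Pexp_def
    by (intro sum.cong) (auto simp: count_prime_factorization_prime in_prime_factors_imp_prime)
  finally show ?thesis ..
qed

lemma size_prime_factorization_less:
  fixes a b :: nat
  assumes "a dvd b" "a \<noteq> b" "b \<noteq> 0"
  shows "size (prime_factorization a) < size (prime_factorization b)"
proof -
  obtain c where b: "b = a * c" using assms(1) ..
  with assms have "a \<noteq> 0" "c \<noteq> 0" "c \<noteq> 1" by auto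
  then have "prime_factorization b = prime_factorization a + prime_factorization c"
    and "prime_factorization c \<noteq> {#}"
    unfolding b by (auto simp: prime_factorization_mult prime_factorization_empty_iff)
  then show ?thesis by (simp add: nonempty_has_size)
qed

lemma (in group) card_subgroup_dvd:
  assumes "subgroup A G" "subgroup B G" "A \<subseteq> B"
  shows "card A dvd card B"
proof -
  interpret B: group "G\<lparr>carrier := B\<rparr>"
    using assms(2) by (rule subgroup.subgroup_is_group) (rule is_group)
  have "subgroup A (G\<lparr>carrier := B\<rparr>)"
    using assms by (simp add: subgroup_incl)
  then have "card (rcosets\<^bsub>G\<lparr>carrier := B\<rparr>\<^esub> A) * card A = card B"
    using B.lagrange by (simp add: order_def)
  then show ?thesis by (metis dvd_triv_right)
qed

lemma (in group) Pexp_less_if_psubset: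
  assumes "subgroup A G" "subgroup B G" "finite B" "A \<subset> B"
  shows "Pexp A < Pexp B"
proof -
  have "card A \<noteq> card B"
    using assms by (metis psubset_card_mono less_irrefl)
  moreover have "card B \<noteq> 0"
    using assms subgroup.one_closed[OF assms(2)] by auto
  ultimately show ?thesis
    unfolding Pexp_eq_size
    using assms by (intro size_prime_factorization_less card_subgroup_dvd) auto
qed

lemma (in group) Pexp_mono:
  assumes "subgroup A G" "subgroup B G" "finite B" "A \<subseteq> B"
  shows "Pexp A \<le> Pexp B"
  using assms Pexp_less_if_psubset[of A B] by (metis order.strict_implies_order order_refl psubsetI)

lemma (in group) Pexp_eq_imp_eq:
  assumes "subgroup A G" "subgroup B G" "finite B" "A \<subseteq> B" "Pexp A = Pexp B"
  shows "A = B"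
  using assms Pexp_less_if_psubset[of A B] by auto

lemma (in group) Pexp_conjg:
  assumes "g \<in> carrier G" "A \<subseteq> carrier G"
  shows "Pexp (conjg G g A) = Pexp A"
  unfolding Pexp_def using assms by (simp add: card_conjg)

lemma rainbow_le_imp_eq:
  assumes "rainbow R" "(x, y) \<in> R" "(x', y') \<in> R" "x \<le> x'" "y \<le> y'"
  shows "(x, y) = (x', y')"
proof -
  obtain a b :: "nat \<Rightarrow> nat" and k where R: "R = {(a i, b i) | i. i \<le> k}"
    and nested: "\<And>i j. i < j \<Longrightarrow> j \<le> k \<Longrightarrow> a i < a j \<and> b j < b i"
    using assms(1) unfolding rainbow_def by blast
  obtain i j where ij: "i \<le> k" "j \<le> k" "(x, y) = (a i, b i)" "(x', y') = (a j, b j)"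
    using assms(2,3) unfolding R by auto
  have "i = j"
  proof (rule ccontr)
    assume "i \<noteq> j"
    then consider "i < j" | "j < i" by linarith
    then show False
      using nested ij assms(4,5) by cases (auto dest: leD)
  qed
  with ij show ?thesis by simp
qed

definition covers_conjugate ::
  "('a, 'b) monoid_scheme \<Rightarrow> 'a set \<Rightarrow> 'a set \<Rightarrow> 'a set \<Rightarrow> 'a set \<Rightarrow> bool" where
  "covers_conjugate G K H A B \<longleftrightarrow>
     (\<exists>g \<in> carrier G. conjg G g K \<subseteq> A \<and> conjg G g H \<subseteq> B \<and> \<not> conjg G g H \<subseteq> A)"

definition arrows_not_covering ::
  "('a, 'b) monoid_scheme \<Rightarrow> 'a set \<Rightarrow> 'a set \<Rightarrow> ('a set \<times> 'a set) set" where
  "arrows_not_covering G K H = {(A, B) \<in> arrows G. \<not> covers_conjugate G K H A B}"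

lemma (in group) covers_conjugate_self:
  assumes "K \<subseteq> H" "H \<subseteq> carrier G" "K \<noteq> H"
  shows "covers_conjugate G K H K H"
  unfolding covers_conjugate_def using assms
  by (intro bexI[of _ \<one>]) (auto simp: conjg_one)

lemma (in group) covers_conjugate_conjgD:
  assumes "K \<subseteq> carrier G" "H \<subseteq> carrier G" "A \<subseteq> carrier G" "B \<subseteq> carrier G"
    and "c \<in> carrier G" "covers_conjugate G K H (conjg G c A) (conjg G c B)"
  shows "covers_conjugate G K H A B"
proof -
  obtain g where g: "g \<in> carrier G" and covered:
    "conjg G g K \<subseteq> conjg G c A" "conjg G g H \<subseteq> conjg G c B" "\<not> conjg G g H \<subseteq> conjg G c A"
    using assms(6) unfolding covers_conjugate_def by blast
  define g' where "g' = inv c \<otimes> g"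
  have g': "g' \<in> carrier G" and "c \<otimes> g' = g"
    using g assms(5) by (simp_all add: g'_def flip: m_assoc)
  then have "conjg G g M = conjg G c (conjg G g' M)" if "M \<subseteq> carrier G" for M
    using that assms(5) by (simp add: conjg_conjg)
  then have "conjg G g' K \<subseteq> A" "conjg G g' H \<subseteq> B" "\<not> conjg G g' H \<subseteq> A"
    using covered assms g' by (simp_all add: conjg_subset_conjg_iff conjg_carrier)
  then show ?thesis unfolding covers_conjugate_def using g' by blast
qed

lemma covers_conjugate_compD:
  assumes "covers_conjugate G K H A C" "A \<subseteq> B"
  shows "covers_conjugate G K H A B \<or> covers_conjugate G K H B C"
proof -
  obtain g where "g \<in> carrier G"
    "conjg G g K \<subseteq> A" "conjg G g H \<subseteq> C" "\<not> conjg G g H \<subseteq> A"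
    using assms(1) unfolding covers_conjugate_def by blast
  then show ?thesis
    using assms(2) unfolding covers_conjugate_def by (cases "conjg G g H \<subseteq> B") blast+
qed

lemma covers_conjugate_restrictD:
  assumes "covers_conjugate G K H (A \<inter> L) L" "L \<subseteq> B"
  shows "covers_conjugate G K H A B"
  using assms unfolding covers_conjugate_def by blast

lemma (in group) transfer_system_arrows_not_covering:
  assumes "K \<subseteq> carrier G" "H \<subseteq> carrier G"
  shows "transfer_system G (arrows_not_covering G K H)"
  unfolding transfer_system_def
proof (intro conjI allI impI)
  fix A B C assume "(A, B) \<in> arrows_not_covering G K H \<and> (B, C) \<in> arrows_not_covering G K H"
  then show "(A, C) \<in> arrows_not_covering G K H"
    using covers_conjugate_compD unfolding arrows_not_covering_def arrows_def by blast
next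
  fix A B c assume "(A, B) \<in> arrows_not_covering G K H \<and> c \<in> carrier G"
  then have A: "subgroup A G" and B: "subgroup B G" and "A \<subseteq> B" and c: "c \<in> carrier G"
    and not_covering: "\<not> covers_conjugate G K H A B"
    unfolding arrows_not_covering_def arrows_def by auto
  have "\<not> covers_conjugate G K H (conjg G c A) (conjg G c B)"
    using not_covering covers_conjugate_conjgD[OF assms subgroup.subset[OF A] subgroup.subset[OF B] c]
    by blast
  then show "(conjg G c A, conjg G c B) \<in> arrows_not_covering G K H"
    unfolding arrows_not_covering_def arrows_def using A B c \<open>A \<subseteq> B\<close>
    by (simp add: subgroup_conjg conjg_subset_conjg_iff subgroup.subset)
next
  fix A B L assume "(A, B) \<in> arrows_not_covering G K H \<and> subgroup L G \<and> L \<subseteq> B"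
  then show "(A \<inter> L, L) \<in> arrows_not_covering G K H"
    using covers_conjugate_restrictD[of G K H A L B] unfolding arrows_not_covering_def arrows_def
    by (auto intro: subgroups_Inter_pair)
qed (auto simp: arrows_not_covering_def arrows_def covers_conjugate_def)

lemma (in group) partial_rainbow_conjg_subset_imp_eq:
  assumes "finite (carrier G)" "partial_rainbow G S" "(K, H) \<in> S" "(K', H') \<in> S"
    and "g \<in> carrier G" "conjg G g K \<subseteq> K'" "conjg G g H \<subseteq> H'"
  shows "(K', H') = (K, H)"
proof -
  have arrows: "(K, H) \<in> arrows G" "(K', H') \<in> arrows G"
    and rb: "rainbow ((\<lambda>(K, H). (Pexp K, Pexp H)) ` S)"
    and no_conjugates: "\<forall>g \<in> carrier G. \<forall>(K, H) \<in> S.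
        (conjg G g K, conjg G g H) \<noteq> (K, H) \<longrightarrow> (conjg G g K, conjg G g H) \<notin> S"
    using assms(2-4) unfolding partial_rainbow_def nonid_arrows_def by auto
  have sub: "subgroup K G" "subgroup H G" "subgroup K' G" "subgroup H' G"
    using arrows unfolding arrows_def by auto
  have finite: "finite K'" "finite H'"
    using sub assms(1) subgroup.subset finite_subset by metis+
  have conj: "subgroup (conjg G g K) G" "subgroup (conjg G g H) G"
    "Pexp (conjg G g K) = Pexp K" "Pexp (conjg G g H) = Pexp H"
    using sub assms(5) by (simp_all add: subgroup_conjg Pexp_conjg subgroup.subset)
  have "Pexp K \<le> Pexp K'" "Pexp H \<le> Pexp H'"
    using Pexp_mono[OF conj(1) sub(3) finite(1) assms(6)]
      Pexp_mono[OF conj(2) sub(4) finite(2) assms(7)] conj(3,4) by simp_all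
  moreover have "(Pexp K, Pexp H) \<in> (\<lambda>(K, H). (Pexp K, Pexp H)) ` S"
    "(Pexp K', Pexp H') \<in> (\<lambda>(K, H). (Pexp K, Pexp H)) ` S"
    by (rule rev_image_eqI[OF assms(3)], simp) (rule rev_image_eqI[OF assms(4)], simp)
  ultimately have "(Pexp K, Pexp H) = (Pexp K', Pexp H')"
    using rainbow_le_imp_eq[OF rb] by blast
  then have "conjg G g K = K'" "conjg G g H = H'"
    using Pexp_eq_imp_eq[OF conj(1) sub(3) finite(1) assms(6)]
      Pexp_eq_imp_eq[OF conj(2) sub(4) finite(2) assms(7)] conj(3,4) by simp_all
  moreover have "(conjg G g K, conjg G g H) \<noteq> (K, H) \<longrightarrow> (conjg G g K, conjg G g H) \<notin> S"
    using bspec[OF bspec[OF no_conjugates assms(5)] assms(3)] by simp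
  ultimately show ?thesis using assms(4) by simp
qed

lemma (in group) partial_rainbow_remove_subset_arrows_not_covering:
  assumes "finite (carrier G)" "partial_rainbow G S" "(K, H) \<in> S"
  shows "S - {(K, H)} \<subseteq> arrows_not_covering G K H"
proof
  fix t assume t: "t \<in> S - {(K, H)}"
  obtain K' H' where t_eq: "t = (K', H')" by fastforce
  have "t \<in> arrows G"
    using assms(2) t unfolding partial_rainbow_def nonid_arrows_def by blast
  moreover have "\<not> covers_conjugate G K H K' H'"
    using partial_rainbow_conjg_subset_imp_eq[OF assms, of K' H'] t t_eq
    unfolding covers_conjugate_def by blast
  ultimately show "t \<in> arrows_not_covering G K H"
    unfolding arrows_not_covering_def t_eq by simp
qed

lemma minimal_generating_setI:
  assumes "nonid_arrows G S"
    and "\<And>s. s \<in> S \<Longrightarrow> \<exists>T. transfer_system G T \<and> S - {s} \<subseteq> T \<and> s \<notin> T"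
  shows "minimal_generating_set G S (gen_ts G S)"
  using assms unfolding minimal_generating_set_def gen_ts_def by blast

theorem proposition3p3:
  fixes G :: "('a, 'b) monoid_scheme" and S :: "('a set \<times> 'a set) set"
  assumes "group G" and "finite (carrier G)" and "partial_rainbow G S"
  shows "minimal_generating_set G S (gen_ts G S)"
proof (rule minimal_generating_setI)
  interpret group G by fact
  show nonid: "nonid_arrows G S"
    using assms(3) unfolding partial_rainbow_def by blast
  fix s assume "s \<in> S"
  moreover obtain K H where s: "s = (K, H)" by fastforce
  ultimately have "subgroup K G" "subgroup H G" "K \<subseteq> H" "K \<noteq> H"
    using nonid unfolding nonid_arrows_def arrows_def by auto
  then have "transfer_system G (arrows_not_covering G K H)"
    by (simp add: transfer_system_arrows_not_covering subgroup.subset)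
  moreover have "s \<notin> arrows_not_covering G K H"
    using \<open>K \<subseteq> H\<close> \<open>K \<noteq> H\<close> \<open>subgroup H G\<close>
    by (simp add: s arrows_not_covering_def covers_conjugate_self subgroup.subset)
  moreover have "S - {s} \<subseteq> arrows_not_covering G K H"
    using assms(2,3) \<open>s \<in> S\<close> s by (simp add: partial_rainbow_remove_subset_arrows_not_covering)
  ultimately show "\<exists>T. transfer_system G T \<and> S - {s} \<subseteq> T \<and> s \<notin> T" by blast
qed

end
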